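(* Let $v_1,\dots,v_m\in\mathbb{R}^2$ and let $P$ be the polygonal path obtained by placing these vectors tip-to-tail in this order, i.e. the path with vertices $q_0=0$, $q_k=v_1+\dots+v_k$ ($1\le k\le m$) and edges $s_k=[q_{k-1},q_k]$. If $P$ has a crossing, then among $v_1,\dots,v_m$ there is a vector with positive first coordinate and one with negative first coordinate, and there is a vector with positive second coordinate and one with negative second coordinate.
   Context: A crossing of $P$ is a point where two non-consecutive edges $s_i,s_j$ ($|i-j|\ge 2$) intersect transversally, i.e. they meet at a single point lying in the interior of both edges, and the two edges are not parallel. Here the "first coordinate" is the $i$-component and the "second coordinate" is the $j$-component of the vector. *)

theory Defs
  imports "HOL-Analysis.Analysis"
begin

definition vertex :: "(nat \<Rightarrow> real^2) \<Rightarrow> nat \<Rightarrow> real^2" where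
  "vertex v k = (\<Sum>i\<in>{1..k}. v i)"

definition edge :: "(nat \<Rightarrow> real^2) \<Rightarrow> nat \<Rightarrow> (real^2) set" where
  "edge v k = closed_segment (vertex v (k - 1)) (vertex v k)"

definition parallel2 :: "real^2 \<Rightarrow> real^2 \<Rightarrow> bool" where
  "parallel2 a b \<longleftrightarrow> a$1 * b$2 - a$2 * b$1 = 0"

definition has_crossing :: "(nat \<Rightarrow> real^2) \<Rightarrow> nat \<Rightarrow> bool" where
  "has_crossing v m \<longleftrightarrow>
     (\<exists>i j p. 1 \<le> i \<and> i + 2 \<le> j \<and> j \<le> m \<and>
        edge v i \<inter> edge v j = {p} \<and>
        p \<in> open_segment (vertex v (i - 1)) (vertex v i) \<and>
        p \<in> open_segment (vertex v (j - 1)) (vertex v j) \<and>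
        \<not> parallel2 (v i) (v j))"

end

theory Submission
  imports Defs
begin

text \<open>At a crossing point, \<open>q\<^sub>i\<^sub>-\<^sub>1 + s v\<^sub>i = q\<^sub>j\<^sub>-\<^sub>1 + t v\<^sub>j\<close> with \<open>0 < s, t < 1\<close>, so
  \<open>(1 - s) v\<^sub>i + v\<^sub>i\<^sub>+\<^sub>1 + \<dots> + v\<^sub>j\<^sub>-\<^sub>1 + t v\<^sub>j = 0\<close> is a vanishing combination with positive
  coefficients. If some coordinate were nonnegative (or nonpositive) on all the \<open>v\<^sub>k\<close>,
  every term of that coordinate would vanish, in particular for \<open>v\<^sub>i\<close> and \<open>v\<^sub>j\<close>;
  since \<open>v\<^sub>i\<close> and \<open>v\<^sub>j\<close> are not parallel, they cannot share a zero coordinate.\<close>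

lemma vertex_diff:
  assumes "1 \<le> i"
  shows "vertex v i - vertex v (i - 1) = v i"
  using assms by (cases i) (auto simp: vertex_def)

lemma vertex_split:
  assumes "1 \<le> i" "i < j"
  shows "vertex v (j - 1) = vertex v (i - 1) + v i + (\<Sum>k\<in>{i<..<j}. v k)"
proof -
  have "{1..j - 1} = {1..i - 1} \<union> {i} \<union> {i<..<j}" using assms by auto
  moreover have "{1..i - 1} \<inter> {i<..<j} = {}" by auto
  ultimately show ?thesis using assms by (simp add: vertex_def sum.union_disjoint)
qed

lemma open_segment_edge_point:
  assumes "p \<in> open_segment (vertex v (i - 1)) (vertex v i)" "1 \<le> i"
  obtains s where "0 < s" "s < 1" "p = vertex v (i - 1) + s *\<^sub>R v i"
proof -
  obtain s where s: "0 < s" "s < 1" "p = (1 - s) *\<^sub>R vertex v (i - 1) + s *\<^sub>R vertex v i"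
    using assms(1) by (auto simp: in_segment)
  then have "p = vertex v (i - 1) + s *\<^sub>R (vertex v i - vertex v (i - 1))"
    by (simp add: algebra_simps)
  also have "\<dots> = vertex v (i - 1) + s *\<^sub>R v i" by (simp only: vertex_diff[OF assms(2)])
  finally show thesis using s that by blast
qed

lemma vanishing_combination_of_later_edges:
  assumes "1 \<le> i" "i < j" "vertex v (i - 1) + s *\<^sub>R v i = vertex v (j - 1) + t *\<^sub>R v j"
  shows "(1 - s) *\<^sub>R v i + (\<Sum>k\<in>{i<..<j}. v k) + t *\<^sub>R v j = 0"
  using assms(3) unfolding vertex_split[OF assms(1,2)] by (simp add: algebra_simps)

lemma nonneg_positive_combination_eq_0:
  fixes x :: "nat \<Rightarrow> real"
  assumes "(1 - s) * x i + (\<Sum>k\<in>{i<..<j}. x k) + t * x j = 0"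
    and "s < 1" "0 < t" "i < j" "\<forall>k\<in>{i..j}. x k \<ge> 0"
  shows "x i = 0" "x j = 0"
proof -
  have "(1 - s) * x i \<ge> 0" "t * x j \<ge> 0" "(\<Sum>k\<in>{i<..<j}. x k) \<ge> 0"
    using assms by (auto intro: sum_nonneg)
  then have "(1 - s) * x i = 0" "t * x j = 0" using assms(1) by linarith+
  then show "x i = 0" "x j = 0" using assms(2,3) by auto
qed

lemma not_parallel2_component_nonzero:
  assumes "\<not> parallel2 a b"
  shows "a $ c \<noteq> 0 \<or> b $ c \<noteq> 0"
proof -
  have "c = 1 \<or> c = 2" by (metis exhaust_2 one_add_one)
  then show ?thesis using assms by (auto simp: parallel2_def)
qed

theorem lemma2p1:
  fixes v :: "nat \<Rightarrow> real^2" and m :: nat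
  assumes "has_crossing v m"
  shows "(\<exists>k\<in>{1..m}. v k $ 1 > 0) \<and> (\<exists>k\<in>{1..m}. v k $ 1 < 0) \<and>
         (\<exists>k\<in>{1..m}. v k $ 2 > 0) \<and> (\<exists>k\<in>{1..m}. v k $ 2 < 0)"
proof -
  obtain i j p where ij: "1 \<le> i" "i + 2 \<le> j" "j \<le> m"
    and p_i: "p \<in> open_segment (vertex v (i - 1)) (vertex v i)"
    and p_j: "p \<in> open_segment (vertex v (j - 1)) (vertex v j)"
    and not_par: "\<not> parallel2 (v i) (v j)"
    using assms unfolding has_crossing_def by blast
  obtain s where s: "0 < s" "s < 1" "p = vertex v (i - 1) + s *\<^sub>R v i"
    using open_segment_edge_point[OF p_i ij(1)] .
  obtain t where t: "0 < t" "t < 1" "p = vertex v (j - 1) + t *\<^sub>R v j"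
    using open_segment_edge_point[OF p_j] ij by auto
  have comb: "(1 - s) *\<^sub>R v i + (\<Sum>k\<in>{i<..<j}. v k) + t *\<^sub>R v j = 0"
    using vanishing_combination_of_later_edges[of i j v s t] ij s(3) t(3) by simp
  have "(1 - s) * x i + (\<Sum>k\<in>{i<..<j}. x k) + t * x j = 0"
    if "x = (\<lambda>k. v k $ c) \<or> x = (\<lambda>k. - v k $ c)" for x c
    using arg_cong[OF comb, of "\<lambda>w. w $ c"] that by (auto simp: sum_component sum_negf)
  then have "\<not> (\<forall>k\<in>{i..j}. x k \<ge> 0)"
    if "x = (\<lambda>k. v k $ c) \<or> x = (\<lambda>k. - v k $ c)" for x c
    using that nonneg_positive_combination_eq_0[of s x i j t] s t ij
      not_parallel2_component_nonzero[OF not_par, of c] by force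
  then have "\<exists>k\<in>{1..m}. v k $ c > 0" "\<exists>k\<in>{1..m}. v k $ c < 0" for c
    using ij by (fastforce simp: not_le)+
  then show ?thesis by blast
qed

end
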